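(* Let $\Gamma$ be a group with finite symmetric generating set $S$ acting by measure-preserving transformations on a standard probability space $(Z,\mu)$, and suppose the action is hyperfinite. Then for $\mu$-almost every $z\in Z$, the Schreier graph of the action of $\Gamma$ on the orbit $\Gamma z$ (with respect to $S$) contains a hyperfinite Følner sequence; i.e. the action of $\Gamma$ on almost every orbit is hyperfinite.
   Context: A p.m.p. action is hyperfinite if its orbit equivalence relation is, up to a null set, an ascending union of finite measurable equivalence relations. The Schreier graph of the action on an orbit $O$ has vertex set $O$ and an edge $\{x,y\}$ when $x\neq y$ and $s(x)=y$ for some $s\in S$. A Følner sequence in a graph is a sequence of finite induced subgraphs $F_n$ whose isoperimetric constant (number of edges leaving $F_n$ divided by $|V(F_n)|$) tends to $0$. A sequence $(G_n)$ of finite bounded-degree graphs is hyperfinite if for every $\varepsilon>0$ there is $K$ such that for every $n$ one can delete at most $\varepsilon|V(G_n)|$ edges of $G_n$ leaving components of at most $K$ vertices. *)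

theory Defs
  imports "HOL-Probability.Probability" "HOL-Algebra.Generated_Groups"
begin

definition pmp_action :: "('g, 'b) monoid_scheme \<Rightarrow> 'z measure \<Rightarrow> ('g \<Rightarrow> 'z \<Rightarrow> 'z) \<Rightarrow> bool" where
  "pmp_action G M act \<longleftrightarrow>
     group G \<and> prob_space M \<and>
     (\<forall>x\<in>space M. act \<one>\<^bsub>G\<^esub> x = x) \<and>
     (\<forall>g\<in>carrier G. \<forall>h\<in>carrier G. \<forall>x\<in>space M. act (g \<otimes>\<^bsub>G\<^esub> h) x = act g (act h x)) \<and>
     (\<forall>g\<in>carrier G. act g \<in> measurable M M \<and> distr M M (act g) = M)"

definition orbit_rel :: "('g, 'b) monoid_scheme \<Rightarrow> 'z measure \<Rightarrow> ('g \<Rightarrow> 'z \<Rightarrow> 'z) \<Rightarrow> ('z \<times> 'z) set" where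
  "orbit_rel G M act = {(x, act g x) | x g. x \<in> space M \<and> g \<in> carrier G}"

definition orbit :: "('g, 'b) monoid_scheme \<Rightarrow> ('g \<Rightarrow> 'z \<Rightarrow> 'z) \<Rightarrow> 'z \<Rightarrow> 'z set" where
  "orbit G act z = (\<lambda>g. act g z) ` carrier G"

definition finite_measurable_equiv :: "'z measure \<Rightarrow> ('z \<times> 'z) set \<Rightarrow> bool" where
  "finite_measurable_equiv M F \<longleftrightarrow>
     equiv (space M) F \<and> F \<in> sets (M \<Otimes>\<^sub>M M) \<and> (\<forall>x\<in>space M. finite (F `` {x}))"

definition hyperfinite_action :: "('g, 'b) monoid_scheme \<Rightarrow> 'z measure \<Rightarrow> ('g \<Rightarrow> 'z \<Rightarrow> 'z) \<Rightarrow> bool" where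
  "hyperfinite_action G M act \<longleftrightarrow>
     (\<exists>N F. N \<in> null_sets M \<and> (\<forall>n. finite_measurable_equiv M (F n)) \<and>
        (\<forall>n. F n \<subseteq> F (Suc n)) \<and>
        (\<forall>x\<in>space M - N. \<forall>y\<in>space M - N.
            (x, y) \<in> orbit_rel G M act \<longleftrightarrow> (\<exists>n. (x, y) \<in> F n)))"

definition schreier_edges :: "'g set \<Rightarrow> ('g \<Rightarrow> 'z \<Rightarrow> 'z) \<Rightarrow> 'z set \<Rightarrow> 'z set set" where
  "schreier_edges S act Orb = {{x, act s x} | x s. x \<in> Orb \<and> s \<in> S \<and> act s x \<noteq> x}"

definition induced_edges :: "'z set set \<Rightarrow> 'z set \<Rightarrow> 'z set set" where
  "induced_edges E V = {e \<in> E. e \<subseteq> V}"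

definition boundary_edges :: "'z set set \<Rightarrow> 'z set \<Rightarrow> 'z set set" where
  "boundary_edges E V = {e \<in> E. card (e \<inter> V) = 1}"

definition iso_const :: "'z set set \<Rightarrow> 'z set \<Rightarrow> real" where
  "iso_const E V = real (card (boundary_edges E V)) / real (card V)"

definition folner_seq :: "'z set \<Rightarrow> 'z set set \<Rightarrow> (nat \<Rightarrow> 'z set) \<Rightarrow> bool" where
  "folner_seq Orb E Fn \<longleftrightarrow>
     (\<forall>n. finite (Fn n) \<and> Fn n \<noteq> {} \<and> Fn n \<subseteq> Orb) \<and>
     (\<lambda>n. iso_const E (Fn n)) \<longlonglongrightarrow> 0"

definition component :: "'z set set \<Rightarrow> 'z \<Rightarrow> 'z set" where
  "component E v = {(x, y). {x, y} \<in> E}\<^sup>* `` {v}"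

definition hyperfinite_graph_seq :: "(nat \<Rightarrow> 'z set) \<Rightarrow> (nat \<Rightarrow> 'z set set) \<Rightarrow> bool" where
  "hyperfinite_graph_seq V E \<longleftrightarrow>
     (\<forall>\<epsilon>>0. \<exists>K::nat. \<forall>n. \<exists>D. D \<subseteq> E n \<and> real (card D) \<le> \<epsilon> * real (card (V n)) \<and>
        (\<forall>v\<in>V n. card (component (E n - D) v) \<le> K))"

definition has_hyperfinite_folner :: "'g set \<Rightarrow> ('g \<Rightarrow> 'z \<Rightarrow> 'z) \<Rightarrow> 'z set \<Rightarrow> bool" where
  "has_hyperfinite_folner S act Orb \<longleftrightarrow>
     (\<exists>Fn. folner_seq Orb (schreier_edges S act Orb) Fn \<and>
        hyperfinite_graph_seq Fn (\<lambda>n. induced_edges (schreier_edges S act Orb) (Fn n)))"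

end

(*
  The relations F n cut a conull invariant set into finite cells increasing to the orbits.
  Since the action preserves the measure, averaging a function over the cells preserves its
  integral (mass transport). For a point y, count the generators s that move y out of its
  n-th cell, or that act on a cell of more than K points. This count bounds the boundary of
  every cell, and also the number of edges whose removal splits a cell into components of at
  most K points; its integral is arbitrarily small for suitable n and K. Choose (n j, K j)
  with integrals below 4^-j. Then almost surely the cell averages of the j-th counts are
  summable, and by Fatou the cell averages of the sum of 2^j times the j-th counts have a
  finite liminf. Along a subsequence of the cells of such a point, the first fact gives the
  Folner property, and the second bounds the proportion of edges to delete for components of
  size K j by 2^-j, uniformly in the cell: hyperfiniteness.
*)

theory Submission
  imports Defs
begin

lemma countable_generate:
  assumes "countable H"
  shows "countable (generate G H)"
proof -
  define W where "W = rec_nat ({\<one>\<^bsub>G\<^esub>} \<union> H \<union> (\<lambda>h. inv\<^bsub>G\<^esub> h) ` H)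
      (\<lambda>_ A. A \<union> (\<lambda>(a, b). a \<otimes>\<^bsub>G\<^esub> b) ` (A \<times> A))"
  have W_0: "W 0 = {\<one>\<^bsub>G\<^esub>} \<union> H \<union> (\<lambda>h. inv\<^bsub>G\<^esub> h) ` H"
    by (simp add: W_def)
  have W_Suc: "W (Suc n) = W n \<union> (\<lambda>(a, b). a \<otimes>\<^bsub>G\<^esub> b) ` (W n \<times> W n)" for n
    by (simp add: W_def)
  have "incseq W"
    by (rule incseq_SucI) (simp add: W_Suc)
  have "h \<in> (\<Union>n. W n)" if "h \<in> generate G H" for h
    using that
  proof induction
    case (eng h1 h2)
    then obtain a b where "h1 \<in> W a" "h2 \<in> W b"
      by blast
    with \<open>incseq W\<close> have "h1 \<in> W (max a b)" "h2 \<in> W (max a b)"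
      by (meson incseqD max.cobounded1 max.cobounded2 subsetD)+
    then have "h1 \<otimes>\<^bsub>G\<^esub> h2 \<in> W (Suc (max a b))"
      by (auto simp: W_Suc)
    then show ?case
      by blast
  qed (auto simp: W_0 intro: exI[of _ 0])
  moreover have "countable (W n)" for n
    by (induction n) (use assms in \<open>simp_all add: W_0 W_Suc\<close>)
  ultimately show ?thesis
    by (blast intro: countable_subset[of _ "\<Union>n. W n"])
qed

lemma liminf_less_top_imp_bounded_subseq:
  fixes f :: "nat \<Rightarrow> ennreal"
  assumes "liminf f < \<infinity>"
  obtains r :: "nat \<Rightarrow> nat" and B :: real where "strict_mono r" "0 < B" "\<And>k. f (r k) \<le> ennreal B"
proof -
  obtain b where "b \<ge> 0" "liminf f = ennreal b"
    using assms by (auto simp: less_top_ennreal)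
  then have "\<not> ennreal (b + 1) \<le> liminf f"
    by (simp add: ennreal_less_iff not_le)
  then obtain y where y: "y < ennreal (b + 1)" "\<not> eventually (\<lambda>i. y < f i) sequentially"
    unfolding le_Liminf_iff by blast
  moreover obtain r :: "nat \<Rightarrow> nat" where "strict_mono r" "\<And>k. \<not> y < f (r k)"
    using not_eventually_sequentiallyD[OF y(2)] by blast
  moreover have "0 < b + 1"
    using \<open>b \<ge> 0\<close> by simp
  ultimately show ?thesis
    using that[of r "b + 1"] by (meson less_le_not_le linorder_le_less_linear order.strict_trans1)
qed

lemma of_nat_mult_divide_cancel_ennreal:
  "0 < k \<Longrightarrow> of_nat k * (a / of_nat k) = (a :: ennreal)"
  by (simp add: ennreal_times_divide mult.commute mult_divide_eq_ennreal)

lemma suminf_indicator_eq_sum: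
  fixes \<psi> :: "'a \<Rightarrow> ennreal"
  assumes "bij_betw f I C" "finite C"
  shows "(\<Sum>i. \<psi> (f i) * indicator I i) = (\<Sum>y\<in>C. \<psi> y)"
proof -
  have "finite I"
    using assms bij_betw_finite by blast
  then have "(\<Sum>i. \<psi> (f i) * indicator I i) = (\<Sum>i\<in>I. \<psi> (f i))"
    by (subst suminf_finite[of I]) (auto intro: sum.cong)
  also have "\<dots> = (\<Sum>y\<in>C. \<psi> y)"
    using sum.reindex_bij_betw[OF assms(1)] .
  finally show ?thesis .
qed

lemma ennreal_le_suminf_term: "f j \<le> (\<Sum>i. f i :: ennreal)"
  using sum_le_suminf[of f "{j}"] by auto

lemma suminf_neq_infinity_imp_tendsto_0:
  fixes f :: "nat \<Rightarrow> ennreal"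
  assumes "(\<Sum>i. f i) \<noteq> \<infinity>"
  shows "f \<longlonglongrightarrow> 0"
proof -
  have "f i < \<infinity>" for i
    using assms ennreal_suminf_lessD[of f \<infinity> i] by (simp add: top.not_eq_extremum)
  then have f: "f = (\<lambda>i. ennreal (enn2real (f i)))"
    by (simp add: fun_eq_iff less_top)
  then have "summable (\<lambda>i. enn2real (f i))"
    using assms by (intro summable_suminf_not_top) auto
  then have "(\<lambda>i. ennreal (enn2real (f i))) \<longlonglongrightarrow> ennreal 0"
    by (intro tendsto_ennrealI summable_LIMSEQ_zero)
  then show ?thesis
    by (subst f) simp
qed

lemma suminf_ennreal_geometric_less_top:
  fixes c :: real
  assumes "0 \<le> c" "c < 1"
  shows "(\<Sum>j. ennreal (c ^ j)) < \<infinity>"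
  using ennreal_suminf_neq_top[OF summable_geometric] assms by (simp add: top.not_eq_extremum)

locale hyperfinite_pmp_action =
  fixes G :: "('g, 'b) monoid_scheme" (structure)
    and M :: "'z::{second_countable_topology, t2_space} measure"
    and act :: "'g \<Rightarrow> 'z \<Rightarrow> 'z"
    and N :: "'z set"
    and F :: "nat \<Rightarrow> ('z \<times> 'z) set"
  assumes pmp: "pmp_action G M act"
    and sets_M: "sets M = sets borel"
    and countable_carrier: "countable (carrier G)"
    and null_N: "N \<in> null_sets M"
    and finite_equiv_F: "\<And>n. finite_measurable_equiv M (F n)"
    and F_Suc: "\<And>n. F n \<subseteq> F (Suc n)"
    and orbit_rel_iff_F: "\<forall>x\<in>space M - N. \<forall>y\<in>space M - N.
      (x, y) \<in> orbit_rel G M act \<longleftrightarrow> (\<exists>n. (x, y) \<in> F n)"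
begin

sublocale prob_space M
  using pmp by (simp add: pmp_action_def)

sublocale group G
  using pmp by (simp add: pmp_action_def)

lemma space_M: "space M = UNIV"
  using sets_eq_imp_space_eq[OF sets_M] by simp

lemma act_one [simp]: "act \<one> x = x"
  using pmp space_M by (simp add: pmp_action_def)

lemma act_mult: "g \<in> carrier G \<Longrightarrow> h \<in> carrier G \<Longrightarrow> act (g \<otimes> h) x = act g (act h x)"
  using pmp space_M by (simp add: pmp_action_def)

lemma act_inv_act [simp]: "g \<in> carrier G \<Longrightarrow> act (inv g) (act g x) = x"
  by (metis act_mult act_one inv_closed l_inv)

lemma act_act_inv [simp]: "g \<in> carrier G \<Longrightarrow> act g (act (inv g) x) = x"
  by (metis act_mult act_one inv_closed r_inv)

lemma measurable_act: "g \<in> carrier G \<Longrightarrow> act g \<in> measurable M M"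
  using pmp by (simp add: pmp_action_def)

lemma borel_measurable_act: "g \<in> carrier G \<Longrightarrow> act g \<in> borel_measurable M"
  using measurable_act measurable_cong_sets[OF refl sets_M] by blast

lemma distr_act: "g \<in> carrier G \<Longrightarrow> distr M M (act g) = M"
  using pmp by (simp add: pmp_action_def)

lemma nn_integral_act:
  assumes "g \<in> carrier G" "f \<in> borel_measurable M"
  shows "(\<integral>\<^sup>+ x. f (act g x) \<partial>M) = (\<integral>\<^sup>+ x. f x \<partial>M)"
  using nn_integral_distr[OF measurable_act[OF assms(1)], of f] assms by (simp add: distr_act)

lemma AE_act:
  assumes "g \<in> carrier G" "AE x in M. P x" "{x. P x} \<in> sets M"
  shows "AE x in M. P (act g x)"
proof -
  have "AE x in distr M M (act g). P x"
    by (subst distr_act[OF assms(1)]) (rule assms(2))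
  then show ?thesis
    using assms by (subst (asm) AE_distr_iff[OF measurable_act]) (simp_all add: space_M)
qed

text \<open>An invariant conull set on which the orbit relation is exactly the union of the \<open>F n\<close>.\<close>

definition good :: "'z set" where
  "good = {x. \<forall>g\<in>carrier G. act g x \<notin> N}"

lemma sets_good: "good \<in> sets M"
proof -
  have "good = (\<Inter>g\<in>carrier G. act g -` (space M - N) \<inter> space M)"
    by (auto simp: good_def space_M)
  also have "\<dots> \<in> sets M"
  proof (intro sets.countable_INT'')
    show "act g -` (space M - N) \<inter> space M \<in> sets M" if "g \<in> carrier G" for g
      using measurable_sets[OF measurable_act[OF that]] null_N by auto
  qed (use countable_carrier sets.top[of M] space_M in auto)
  finally show ?thesis .
qed

lemma AE_good: "AE x in M. x \<in> good"
proof -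
  have "{x. x \<notin> N} = space M - N"
    by (auto simp: space_M)
  then have "{x. x \<notin> N} \<in> sets M"
    using null_N by auto
  then have "AE x in M. act g x \<notin> N" if "g \<in> carrier G" for g
    using that AE_not_in[OF null_N] by (intro AE_act)
  then show ?thesis
    using countable_carrier by (simp add: good_def AE_ball_countable)
qed

lemma act_good: "x \<in> good \<Longrightarrow> g \<in> carrier G \<Longrightarrow> act g x \<in> good"
  by (simp add: good_def act_mult[symmetric])

lemma good_not_N: "x \<in> good \<Longrightarrow> x \<notin> N"
  using act_one by (force simp: good_def)

lemma orbit_rel_iff_F_good:
  assumes "x \<in> good" "y \<in> good"
  shows "(\<exists>g\<in>carrier G. y = act g x) \<longleftrightarrow> (\<exists>n. (x, y) \<in> F n)"
proof -
  have "(x, y) \<in> orbit_rel G M act \<longleftrightarrow> (\<exists>g\<in>carrier G. y = act g x)"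
    by (auto simp: orbit_rel_def space_M)
  then show ?thesis
    using orbit_rel_iff_F good_not_N assms by (simp add: space_M)
qed

lemma equiv_F: "equiv UNIV (F n)"
  using finite_equiv_F[of n] by (simp add: finite_measurable_equiv_def space_M)

lemma incseq_F: "incseq F"
  using F_Suc by (rule incseq_SucI)

text \<open>Restricting the classes to \<open>good\<close> makes every cell empty off \<open>good\<close>, so the identities
  below hold everywhere rather than almost everywhere.\<close>

definition cell :: "nat \<Rightarrow> 'z \<Rightarrow> 'z set" where
  "cell n x = (if x \<in> good then F n `` {x} \<inter> good else {})"

lemma finite_cell: "finite (cell n x)"
  using finite_equiv_F[of n] by (simp add: cell_def finite_measurable_equiv_def space_M)

lemma cell_self: "x \<in> good \<Longrightarrow> x \<in> cell n x"
  using equiv_F[of n] by (auto simp: cell_def equiv_def refl_on_def)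

lemma cell_subset_good: "cell n x \<subseteq> good"
  by (auto simp: cell_def)

lemma cell_nonempty_iff: "cell n x \<noteq> {} \<longleftrightarrow> x \<in> good"
  using cell_self by (auto simp: cell_def)

lemma cell_eq:
  assumes "y \<in> cell n x"
  shows "cell n y = cell n x"
proof -
  have "x \<in> good" "y \<in> good" "(x, y) \<in> F n"
    using assms by (auto simp: cell_def split: if_splits)
  then show ?thesis
    using equiv_class_eq[OF equiv_F] by (simp add: cell_def)
qed

lemma cell_sym:
  assumes "y \<in> cell n x"
  shows "x \<in> cell n y"
proof -
  have "x \<in> good"
    using assms cell_nonempty_iff by blast
  then show ?thesis
    using cell_self cell_eq[OF assms] by simp
qed

lemma cell_mono: "n \<le> m \<Longrightarrow> cell n x \<subseteq> cell m x"
  using incseq_F by (auto simp: cell_def incseq_def)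

lemma cell_subset_orbit: "cell n x \<subseteq> orbit G act x"
proof
  fix y
  assume "y \<in> cell n x"
  then have "x \<in> good" "y \<in> good" "(x, y) \<in> F n"
    by (auto simp: cell_def split: if_splits)
  then obtain g where "g \<in> carrier G" "y = act g x"
    using orbit_rel_iff_F_good by blast
  then show "y \<in> orbit G act x"
    by (auto simp: orbit_def)
qed

lemma ex_cell_act:
  "x \<in> good \<Longrightarrow> g \<in> carrier G \<Longrightarrow> \<exists>n. act g x \<in> cell n x"
  using orbit_rel_iff_F_good act_good by (force simp: cell_def)

lemma sets_act_in_cell:
  assumes "g \<in> carrier G"
  shows "{x. act g x \<in> cell n x} \<in> sets M"
proof -
  have "(\<lambda>x. (x, act g x)) \<in> measurable M (M \<Otimes>\<^sub>M M)"
    using assms by (intro measurable_Pair measurable_ident_sets measurable_act) auto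
  then have "{x. (x, act g x) \<in> F n} \<in> sets M"
    using measurable_sets[of _ M "M \<Otimes>\<^sub>M M" "F n"] finite_equiv_F[of n]
    by (auto simp: finite_measurable_equiv_def space_M vimage_def)
  moreover have "{x. act g x \<in> good} \<in> sets M"
    using measurable_sets[OF measurable_act[OF assms] sets_good] by (simp add: space_M vimage_def)
  moreover have "{x. act g x \<in> cell n x} = good \<inter> {x. (x, act g x) \<in> F n} \<inter> {x. act g x \<in> good}"
    by (auto simp: cell_def)
  ultimately show ?thesis
    using sets_good by simp
qed

definition enum :: "nat \<Rightarrow> 'g" where
  "enum = from_nat_into (carrier G)"

lemma enum_in_carrier [simp]: "enum i \<in> carrier G"
  using from_nat_into[of "carrier G" i] one_closed by (auto simp: enum_def)

lemma ex_enum: "g \<in> carrier G \<Longrightarrow> \<exists>i. enum i = g"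
  using from_nat_into_to_nat_on[OF countable_carrier] by (auto simp: enum_def)

text \<open>Every point \<open>y\<close> of \<open>cell n x\<close> is labelled by the least \<open>i\<close> with \<open>act (enum i) x = y\<close>.
  The sets \<open>first_in_cell n i\<close> are measurable and turn cell sums into countable sums of
  measurable functions.\<close>

definition first_in_cell :: "nat \<Rightarrow> nat \<Rightarrow> 'z set" where
  "first_in_cell n i =
     {x. act (enum i) x \<in> cell n x \<and> (\<forall>j<i. act (enum j) x \<noteq> act (enum i) x)}"

lemma sets_first_in_cell: "first_in_cell n i \<in> sets M"
proof -
  have "{x. act (enum j) x = act (enum i) x} \<in> sets M" for j
    using measurable_equality_set[OF borel_measurable_act borel_measurable_act]
    by (simp add: space_M)
  moreover have "first_in_cell n i =
      {x. act (enum i) x \<in> cell n x} - (\<Union>j<i. {x. act (enum j) x = act (enum i) x})"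
    by (auto simp: first_in_cell_def)
  ultimately show ?thesis
    using sets_act_in_cell by auto
qed

lemma first_in_cell_iff:
  "x \<in> first_in_cell n i \<and> act (enum i) x = y \<longleftrightarrow>
     y \<in> cell n x \<and> i = (LEAST j. act (enum j) x = y)"
proof
  assume *: "x \<in> first_in_cell n i \<and> act (enum i) x = y"
  then have "y \<in> cell n x" "act (enum i) x = y" "\<forall>j<i. act (enum j) x \<noteq> y"
    by (auto simp: first_in_cell_def)
  moreover from this(2,3) have "i = (LEAST j. act (enum j) x = y)"
    by (metis (mono_tags, lifting) Least_equality leI)
  ultimately show "y \<in> cell n x \<and> i = (LEAST j. act (enum j) x = y)"
    by blast
next
  assume *: "y \<in> cell n x \<and> i = (LEAST j. act (enum j) x = y)"
  then have "y \<in> orbit G act x"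
    using cell_subset_orbit by blast
  then obtain g where "g \<in> carrier G" "y = act g x"
    by (auto simp: orbit_def)
  then obtain k where "act (enum k) x = y"
    using ex_enum by blast
  then have "act (enum i) x = y"
    using * LeastI[where P = "\<lambda>j. act (enum j) x = y"] by simp
  moreover have "\<forall>j<i. act (enum j) x \<noteq> y"
    using * not_less_Least[where P = "\<lambda>j. act (enum j) x = y"] by blast
  ultimately show "x \<in> first_in_cell n i \<and> act (enum i) x = y"
    using * unfolding first_in_cell_def by blast
qed

lemma bij_betw_enum_cell:
  "bij_betw (\<lambda>i. act (enum i) x) {i. x \<in> first_in_cell n i} (cell n x)"
proof (rule bij_betw_byWitness[where f' = "\<lambda>y. LEAST j. act (enum j) x = y"])
  have "act (enum i) x \<in> cell n x \<and> (LEAST j. act (enum j) x = act (enum i) x) = i"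
    if "x \<in> first_in_cell n i" for i
    using that first_in_cell_iff[of x n i "act (enum i) x"] by simp
  then show "\<forall>i\<in>{i. x \<in> first_in_cell n i}. (LEAST j. act (enum j) x = act (enum i) x) = i"
    and "(\<lambda>i. act (enum i) x) ` {i. x \<in> first_in_cell n i} \<subseteq> cell n x"
    by auto
  have "x \<in> first_in_cell n (LEAST j. act (enum j) x = y) \<and>
      act (enum (LEAST j. act (enum j) x = y)) x = y" if "y \<in> cell n x" for y
    using that first_in_cell_iff[of x n "LEAST j. act (enum j) x = y" y] by simp
  then show "\<forall>y\<in>cell n x. act (enum (LEAST j. act (enum j) x = y)) x = y"
    and "(\<lambda>y. LEAST j. act (enum j) x = y) ` cell n x \<subseteq> {i. x \<in> first_in_cell n i}"
    by auto
qed

lemma bij_betw_enum_cell_inv: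
  "bij_betw (\<lambda>i. act (inv (enum i)) z) {i. act (inv (enum i)) z \<in> first_in_cell n i} (cell n z)"
proof (rule bij_betw_byWitness[where f' = "\<lambda>y. LEAST j. act (enum j) y = z"])
  have "act (inv (enum i)) z \<in> cell n z \<and> (LEAST j. act (enum j) (act (inv (enum i)) z) = z) = i"
    if "act (inv (enum i)) z \<in> first_in_cell n i" for i
    using that first_in_cell_iff[of "act (inv (enum i)) z" n i z] cell_sym by simp
  then show "\<forall>i\<in>{i. act (inv (enum i)) z \<in> first_in_cell n i}.
      (LEAST j. act (enum j) (act (inv (enum i)) z) = z) = i"
    and "(\<lambda>i. act (inv (enum i)) z) ` {i. act (inv (enum i)) z \<in> first_in_cell n i} \<subseteq> cell n z"
    by auto
  have "y \<in> first_in_cell n (LEAST j. act (enum j) y = z) \<and>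
      act (inv (enum (LEAST j. act (enum j) y = z))) z = y" if "y \<in> cell n z" for y
    using first_in_cell_iff[of y n "LEAST j. act (enum j) y = z" z] cell_sym[OF that]
    by (metis act_inv_act enum_in_carrier)
  then show "\<forall>y\<in>cell n z. act (inv (enum (LEAST j. act (enum j) y = z))) z = y"
    and "(\<lambda>y. LEAST j. act (enum j) y = z) ` cell n z
      \<subseteq> {i. act (inv (enum i)) z \<in> first_in_cell n i}"
    by auto
qed

lemma sum_cell_eq_suminf:
  fixes \<phi> :: "'z \<Rightarrow> ennreal"
  shows "(\<Sum>y\<in>cell n x. \<phi> y) = (\<Sum>i. \<phi> (act (enum i) x) * indicator (first_in_cell n i) x)"
  using suminf_indicator_eq_sum[OF bij_betw_enum_cell finite_cell, of \<phi>]
  by (simp add: indicator_def)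

lemma sum_cell_eq_suminf_inv:
  fixes \<psi> :: "'z \<Rightarrow> ennreal"
  shows "(\<Sum>x\<in>cell n z. \<psi> x) =
     (\<Sum>i. \<psi> (act (inv (enum i)) z) * indicator (first_in_cell n i) (act (inv (enum i)) z))"
  using suminf_indicator_eq_sum[OF bij_betw_enum_cell_inv finite_cell, of \<psi>]
  by (simp add: indicator_def)

lemma mass_transport:
  fixes \<Phi> :: "'z \<Rightarrow> 'z \<Rightarrow> ennreal"
  assumes "\<And>g. g \<in> carrier G \<Longrightarrow> (\<lambda>x. \<Phi> x (act g x)) \<in> borel_measurable M"
  shows "(\<integral>\<^sup>+ x. (\<Sum>y\<in>cell n x. \<Phi> x y) \<partial>M) = (\<integral>\<^sup>+ y. (\<Sum>x\<in>cell n y. \<Phi> x y) \<partial>M)"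
proof -
  define h where "h i x = \<Phi> x (act (enum i) x) * indicator (first_in_cell n i) x" for i x
  have h: "h i \<in> borel_measurable M" for i
  proof -
    have [measurable]: "(\<lambda>x. \<Phi> x (act (enum i) x)) \<in> borel_measurable M"
      by (rule assms) simp
    have [measurable]: "first_in_cell n i \<in> sets M"
      by (rule sets_first_in_cell)
    show ?thesis
      unfolding h_def by measurable
  qed
  have "(\<integral>\<^sup>+ x. (\<Sum>y\<in>cell n x. \<Phi> x y) \<partial>M) = (\<integral>\<^sup>+ x. (\<Sum>i. h i x) \<partial>M)"
    by (simp add: h_def sum_cell_eq_suminf)
  also have "\<dots> = (\<Sum>i. \<integral>\<^sup>+ x. h i x \<partial>M)"
    by (rule nn_integral_suminf[OF h])
  also have "\<dots> = (\<Sum>i. \<integral>\<^sup>+ y. h i (act (inv (enum i)) y) \<partial>M)"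
    using nn_integral_act[OF inv_closed[OF enum_in_carrier] h] by simp
  also have "\<dots> = (\<integral>\<^sup>+ y. (\<Sum>i. h i (act (inv (enum i)) y)) \<partial>M)"
    using measurable_compose[OF measurable_act[OF inv_closed[OF enum_in_carrier]] h]
    by (rule nn_integral_suminf[symmetric])
  also have "\<dots> = (\<integral>\<^sup>+ y. (\<Sum>x\<in>cell n y. \<Phi> x y) \<partial>M)"
    by (simp add: h_def sum_cell_eq_suminf_inv)
  finally show ?thesis .
qed

definition cell_avg :: "nat \<Rightarrow> ('z \<Rightarrow> ennreal) \<Rightarrow> 'z \<Rightarrow> ennreal" where
  "cell_avg n \<phi> x = (\<Sum>y\<in>cell n x. \<phi> y) / of_nat (card (cell n x))"

lemma borel_measurable_sum_cell:
  fixes \<phi> :: "'z \<Rightarrow> ennreal"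
  assumes [measurable]: "\<phi> \<in> borel_measurable M"
  shows "(\<lambda>x. \<Sum>y\<in>cell n x. \<phi> y) \<in> borel_measurable M"
proof -
  have [measurable]: "act (enum i) \<in> measurable M M" "first_in_cell n i \<in> sets M" for i
    by (simp_all add: measurable_act sets_first_in_cell)
  show ?thesis
    unfolding sum_cell_eq_suminf by measurable
qed

lemma borel_measurable_card_cell:
  "(\<lambda>x. of_nat (card (cell n x)) :: ennreal) \<in> borel_measurable M"
  using borel_measurable_sum_cell[of "\<lambda>_. 1" n] by simp

lemma borel_measurable_cell_avg:
  assumes "\<phi> \<in> borel_measurable M"
  shows "cell_avg n \<phi> \<in> borel_measurable M"
proof -
  have [measurable]: "(\<lambda>x. \<Sum>y\<in>cell n x. \<phi> y) \<in> borel_measurable M"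
    "(\<lambda>x. of_nat (card (cell n x)) :: ennreal) \<in> borel_measurable M"
    using assms by (simp_all add: borel_measurable_sum_cell borel_measurable_card_cell)
  show ?thesis
    unfolding cell_avg_def[abs_def] by measurable
qed

lemma sum_cell_eq_card_times_avg:
  "(\<Sum>y\<in>cell n x. \<phi> y) = of_nat (card (cell n x)) * cell_avg n \<phi> x"
proof (cases "cell n x = {}")
  case False
  then show ?thesis
    using finite_cell by (simp add: cell_avg_def of_nat_mult_divide_cancel_ennreal card_gt_0_iff)
qed simp

lemma nn_integral_cell_avg:
  assumes "\<phi> \<in> borel_measurable M"
  shows "(\<integral>\<^sup>+ x. cell_avg n \<phi> x \<partial>M) = (\<integral>\<^sup>+ x. \<phi> x \<partial>M)"
proof -
  have [measurable]: "\<phi> \<in> borel_measurable M"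
    "(\<lambda>x. of_nat (card (cell n x)) :: ennreal) \<in> borel_measurable M"
    by (simp_all add: assms borel_measurable_card_cell)
  have "(\<lambda>x. \<phi> (act g x) / of_nat (card (cell n x))) \<in> borel_measurable M" if "g \<in> carrier G" for g
  proof -
    have [measurable]: "act g \<in> measurable M M"
      using that by (rule measurable_act)
    show ?thesis
      by measurable
  qed
  then have "(\<integral>\<^sup>+ x. (\<Sum>y\<in>cell n x. \<phi> y / of_nat (card (cell n x))) \<partial>M) =
      (\<integral>\<^sup>+ y. (\<Sum>x\<in>cell n y. \<phi> y / of_nat (card (cell n x))) \<partial>M)"
    by (rule mass_transport)
  moreover have "cell_avg n \<phi> x = (\<Sum>y\<in>cell n x. \<phi> y / of_nat (card (cell n x)))" for x
    by (simp add: cell_avg_def divide_ennreal_def sum_distrib_right)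
  moreover have "(\<Sum>x\<in>cell n y. \<phi> y / of_nat (card (cell n x))) = \<phi> y" if "y \<in> good" for y
  proof -
    have "(\<Sum>x\<in>cell n y. \<phi> y / of_nat (card (cell n x))) =
        (\<Sum>x\<in>cell n y. \<phi> y / of_nat (card (cell n y)))"
      using cell_eq cell_sym by (intro sum.cong) auto
    also have "\<dots> = \<phi> y"
    proof -
      have "0 < card (cell n y)"
        using cell_self[OF that, of n] finite_cell[of n y] card_gt_0_iff by blast
      then show ?thesis
        by (subst sum_constant) (rule of_nat_mult_divide_cancel_ennreal)
    qed
    finally show ?thesis .
  qed
  ultimately show ?thesis
    using AE_good by (auto intro!: nn_integral_cong_AE)
qed

lemma sets_act_notin_cell: "g \<in> carrier G \<Longrightarrow> {x. act g x \<notin> cell n x} \<in> sets M"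
  using sets.compl_sets[OF sets_act_in_cell]
  by (simp add: space_M Compl_eq_Diff_UNIV[symmetric] Collect_neg_eq)

lemma sets_large_cell: "{x. K < card (cell n x)} \<in> sets M"
proof -
  have [measurable]: "(\<lambda>x. of_nat (card (cell n x)) :: ennreal) \<in> borel_measurable M"
    by (rule borel_measurable_card_cell)
  have "{x \<in> space M. of_nat K < (of_nat (card (cell n x)) :: ennreal)} \<in> sets M"
    by measurable
  then show ?thesis
    by (simp add: space_M)
qed

lemma tendsto_emeasure_leave_cell:
  assumes "g \<in> carrier G"
  shows "(\<lambda>n. emeasure M {x. act g x \<notin> cell n x}) \<longlonglongrightarrow> 0"
proof -
  have "decseq (\<lambda>n. {x. act g x \<notin> cell n x})"
    using cell_mono by (force simp: decseq_def)
  then have "(\<lambda>n. emeasure M {x. act g x \<notin> cell n x}) \<longlonglongrightarrow>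
      emeasure M (\<Inter>n. {x. act g x \<notin> cell n x})"
    using sets_act_notin_cell[OF assms] by (intro Lim_emeasure_decseq) auto
  moreover have "AE x in M. \<not> (\<forall>n. act g x \<notin> cell n x)"
    using AE_good ex_cell_act[OF _ assms] by (auto elim: eventually_mono)
  then have "emeasure M {x \<in> space M. \<forall>n. act g x \<notin> cell n x} = 0"
    by (rule emeasure_eq_0_AE)
  moreover have "{x \<in> space M. \<forall>n. act g x \<notin> cell n x} = (\<Inter>n. {x. act g x \<notin> cell n x})"
    by (auto simp: space_M)
  ultimately show ?thesis
    by simp
qed

lemma tendsto_emeasure_large_cell:
  "(\<lambda>K. emeasure M {x. K < card (cell n x)}) \<longlonglongrightarrow> 0"
proof -
  have "decseq (\<lambda>K. {x. K < card (cell n x)})"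
    by (auto simp: decseq_def)
  then have "(\<lambda>K. emeasure M {x. K < card (cell n x)}) \<longlonglongrightarrow>
      emeasure M (\<Inter>K. {x. K < card (cell n x)})"
    using sets_large_cell by (intro Lim_emeasure_decseq) auto
  moreover have "(\<Inter>K. {x. K < card (cell n x)}) = {}"
    by (auto dest: spec[of _ "card (cell n _)"])
  ultimately show ?thesis
    by simp
qed

lemma AE_suminf_cell_avg_finite:
  assumes "\<And>j. f j \<in> borel_measurable M" and "(\<Sum>j. \<integral>\<^sup>+ x. f j x \<partial>M) \<noteq> \<infinity>"
  shows "AE x in M. (\<Sum>j. cell_avg (n j) (f j) x) \<noteq> \<infinity>"
proof (rule nn_integral_PInf_AE)
  have [measurable]: "cell_avg (n j) (f j) \<in> borel_measurable M" for j
    using assms(1) by (rule borel_measurable_cell_avg)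
  show "(\<lambda>x. \<Sum>j. cell_avg (n j) (f j) x) \<in> borel_measurable M"
    by measurable
  show "(\<integral>\<^sup>+ x. (\<Sum>j. cell_avg (n j) (f j) x) \<partial>M) \<noteq> \<infinity>"
    using assms by (simp add: nn_integral_suminf nn_integral_cell_avg)
qed

lemma AE_liminf_cell_avg_finite:
  assumes "\<phi> \<in> borel_measurable M" and "(\<integral>\<^sup>+ x. \<phi> x \<partial>M) \<noteq> \<infinity>"
  shows "AE x in M. liminf (\<lambda>j. cell_avg (n j) \<phi> x) \<noteq> \<infinity>"
proof (rule nn_integral_PInf_AE)
  have [measurable]: "cell_avg (n j) \<phi> \<in> borel_measurable M" for j
    using assms(1) by (rule borel_measurable_cell_avg)
  show "(\<lambda>x. liminf (\<lambda>j. cell_avg (n j) \<phi> x)) \<in> borel_measurable M"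
    by measurable
  have "(\<integral>\<^sup>+ x. liminf (\<lambda>j. cell_avg (n j) \<phi> x) \<partial>M) \<le>
      liminf (\<lambda>j. \<integral>\<^sup>+ x. cell_avg (n j) \<phi> x \<partial>M)"
    by (rule nn_integral_liminf) simp
  also have "\<dots> = (\<integral>\<^sup>+ x. \<phi> x \<partial>M)"
    by (simp add: nn_integral_cell_avg assms(1) Liminf_const)
  finally show "(\<integral>\<^sup>+ x. liminf (\<lambda>j. cell_avg (n j) \<phi> x) \<partial>M) \<noteq> \<infinity>"
    using assms(2) by (auto simp: top_unique)
qed

end

locale hyperfinite_schreier = hyperfinite_pmp_action G M act N F
  for G :: "('g, 'b) monoid_scheme" (structure)
    and M :: "'z::{second_countable_topology, t2_space} measure"
    and act N F +
  fixes S :: "'g set"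
  assumes finite_S: "finite S"
    and S_carrier: "S \<subseteq> carrier G"
    and inv_S: "\<forall>s\<in>S. inv s \<in> S"
begin

definition bad_gens :: "nat \<Rightarrow> nat \<Rightarrow> 'z \<Rightarrow> 'g set" where
  "bad_gens n K y = {s \<in> S. act s y \<notin> cell n y \<or> K < card (cell n y)}"

lemma finite_bad_gens: "finite (bad_gens n K y)"
  using finite_S by (simp add: bad_gens_def)

abbreviation bad_count :: "nat \<Rightarrow> nat \<Rightarrow> 'z \<Rightarrow> ennreal" where
  "bad_count n K y \<equiv> of_nat (card (bad_gens n K y))"

lemma bad_count_eq_sum_indicator:
  "bad_count n K y =
     (\<Sum>s\<in>S. indicator ({x. act s x \<notin> cell n x} \<union> {x. K < card (cell n x)}) y :: ennreal)"
proof -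
  have "bad_gens n K y = {s \<in> S. y \<in> {x. act s x \<notin> cell n x} \<union> {x. K < card (cell n x)}}"
    by (auto simp: bad_gens_def)
  then have "card (bad_gens n K y) =
      (\<Sum>s\<in>S. of_bool (y \<in> {x. act s x \<notin> cell n x} \<union> {x. K < card (cell n x)}))"
    by (simp only: card_eq_sum sum.inter_filter[OF finite_S] of_bool_def)
  then show ?thesis
    by (simp add: indicator_def)
qed

lemma borel_measurable_bad_count: "bad_count n K \<in> borel_measurable M"
  unfolding bad_count_eq_sum_indicator
  using S_carrier sets_act_notin_cell sets_large_cell
  by (intro borel_measurable_sum borel_measurable_indicator sets.Un) auto

lemma ex_small_bad_count:
  assumes "0 < e"
  shows "\<exists>n K. (\<integral>\<^sup>+ y. bad_count n K y \<partial>M) < e"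
proof -
  define a where "a n = (\<Sum>s\<in>S. emeasure M {x. act s x \<notin> cell n x})" for n
  have "a \<longlonglongrightarrow> (\<Sum>s\<in>S. 0)"
    unfolding a_def using S_carrier by (intro tendsto_sum tendsto_emeasure_leave_cell) auto
  then have "eventually (\<lambda>n. a n < e) sequentially"
    using assms by (intro order_tendstoD(2)) auto
  then obtain n where "a n < e"
    by (auto simp: eventually_sequentially)
  moreover have "(\<lambda>K. a n + of_nat (card S) * emeasure M {x. K < card (cell n x)})
      \<longlonglongrightarrow> a n + of_nat (card S) * 0"
    by (intro tendsto_add tendsto_const tendsto_mult_ennreal tendsto_emeasure_large_cell) auto
  ultimately have "eventually (\<lambda>K. a n + of_nat (card S) * emeasure M {x. K < card (cell n x)} < e)
      sequentially"
    by (intro order_tendstoD(2)) auto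
  then obtain K where K: "a n + of_nat (card S) * emeasure M {x. K < card (cell n x)} < e"
    by (auto simp: eventually_sequentially)
  have "(\<integral>\<^sup>+ y. bad_count n K y \<partial>M) =
      (\<Sum>s\<in>S. emeasure M ({x. act s x \<notin> cell n x} \<union> {x. K < card (cell n x)}))"
    unfolding bad_count_eq_sum_indicator using S_carrier sets_act_notin_cell sets_large_cell
    by (subst nn_integral_sum) (auto intro!: sum.cong)
  also have "\<dots> \<le> (\<Sum>s\<in>S. emeasure M {x. act s x \<notin> cell n x} + emeasure M {x. K < card (cell n x)})"
    using S_carrier sets_act_notin_cell sets_large_cell
    by (intro sum_mono emeasure_subadditive) auto
  also have "\<dots> = a n + of_nat (card S) * emeasure M {x. K < card (cell n x)}"
    by (simp add: a_def sum.distrib)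
  finally show ?thesis
    using K by (blast intro: le_less_trans)
qed

lemma boundary_edges_subset:
  "boundary_edges (schreier_edges S act Orb) V \<subseteq>
     (\<lambda>(y, s). {y, act s y}) ` (SIGMA y:V. {s \<in> S. act s y \<notin> V})"
proof
  fix e
  assume "e \<in> boundary_edges (schreier_edges S act Orb) V"
  then obtain a s where s: "s \<in> S" "act s a \<noteq> a" and e: "e = {a, act s a}"
    and one: "card (e \<inter> V) = 1"
    by (auto simp: boundary_edges_def schreier_edges_def)
  show "e \<in> (\<lambda>(y, s). {y, act s y}) ` (SIGMA y:V. {s \<in> S. act s y \<notin> V})"
  proof (cases "a \<in> V")
    case True
    then have "act s a \<notin> V"
      using one s(2) by (auto simp: e)
    then show ?thesis
      using True s e by (auto intro!: image_eqI[where x = "(a, s)"])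
  next
    case False
    then have "act s a \<in> V"
      using one by (cases "act s a \<in> V") (auto simp: e)
    moreover have "inv s \<in> S" "act (inv s) (act s a) = a"
      using s inv_S S_carrier by auto
    ultimately show ?thesis
      using False e by (auto intro!: image_eqI[where x = "(act s a, inv s)"])
  qed
qed

lemma card_boundary_cell_le:
  "card (boundary_edges (schreier_edges S act Orb) (cell n x)) \<le>
     (\<Sum>y\<in>cell n x. card (bad_gens n K y))"
proof -
  let ?P = "SIGMA y:cell n x. {s \<in> S. act s y \<notin> cell n x}"
  have "finite ?P"
    using finite_cell finite_S by auto
  then have "card (boundary_edges (schreier_edges S act Orb) (cell n x)) \<le> card ?P"
    using boundary_edges_subset by (rule surj_card_le)
  also have "\<dots> = (\<Sum>y\<in>cell n x. card {s \<in> S. act s y \<notin> cell n x})"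
    using finite_cell finite_S by simp
  also have "\<dots> \<le> (\<Sum>y\<in>cell n x. card (bad_gens n K y))"
    using cell_eq finite_S by (intro sum_mono card_mono) (auto simp: bad_gens_def)
  finally show ?thesis .
qed

definition cut_edges :: "nat \<Rightarrow> nat \<Rightarrow> 'z set set" where
  "cut_edges n K = {{y, act s y} | y s. s \<in> bad_gens n K y}"

lemma card_induced_cut_edges_le:
  assumes "finite V"
  shows "card (induced_edges E V \<inter> cut_edges n K) \<le> (\<Sum>y\<in>V. card (bad_gens n K y))"
proof -
  let ?P = "SIGMA y:V. bad_gens n K y"
  have "finite ?P"
    using assms finite_bad_gens by auto
  moreover have "induced_edges E V \<inter> cut_edges n K \<subseteq> (\<lambda>(y, s). {y, act s y}) ` ?P"
    by (auto simp: induced_edges_def cut_edges_def)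
  ultimately have "card (induced_edges E V \<inter> cut_edges n K) \<le> card ?P"
    by (rule surj_card_le)
  then show ?thesis
    using assms finite_bad_gens by simp
qed

lemma uncut_edge_in_small_cell:
  assumes "{a, b} \<in> schreier_edges S act Orb - cut_edges n K"
  shows "b \<in> cell n a \<and> card (cell n a) \<le> K"
proof -
  obtain y s where s: "s \<in> S" and ab: "{a, b} = {y, act s y}"
    using assms by (auto simp: schreier_edges_def)
  have "s \<notin> bad_gens n K y"
    using assms ab by (auto simp: cut_edges_def)
  then have y: "act s y \<in> cell n y" "card (cell n y) \<le> K"
    using s by (auto simp: bad_gens_def)
  moreover have "y \<in> cell n y"
    using y(1) cell_nonempty_iff cell_self by blast
  moreover have "cell n (act s y) = cell n y"
    using y(1) by (rule cell_eq)
  ultimately show ?thesis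
    using ab by (auto simp: doubleton_eq_iff)
qed

lemma card_component_le:
  assumes "E \<subseteq> schreier_edges S act Orb - cut_edges n K" and "v \<in> good"
  shows "card (component E v) \<le> max 1 K"
proof -
  have "w = v \<or> (w \<in> cell n v \<and> card (cell n v) \<le> K)"
    if "(v, w) \<in> {(a, b). {a, b} \<in> E}\<^sup>*" for w
    using that
  proof (induction rule: rtrancl_induct)
    case (step w b)
    then have "b \<in> cell n w" "card (cell n w) \<le> K"
      using uncut_edge_in_small_cell assms(1) by blast+
    then show ?case
      using step.IH cell_eq by auto
  qed simp
  then have sub: "component E v \<subseteq> (if card (cell n v) \<le> K then cell n v else {v})"
    using cell_self[OF assms(2)] by (auto simp: component_def)
  show ?thesis
  proof (cases "card (cell n v) \<le> K")
    case True
    then have "card (component E v) \<le> card (cell n v)"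
      using sub finite_cell by (simp add: card_mono)
    then show ?thesis
      using True by simp
  next
    case False
    then have "card (component E v) \<le> card {v}"
      using sub by (intro card_mono) auto
    then show ?thesis
      by simp
  qed
qed

lemma iso_const_cell_le:
  assumes "x \<in> good"
  shows "ennreal (iso_const (schreier_edges S act Orb) (cell n x)) \<le> cell_avg n (bad_count n K) x"
proof -
  let ?b = "card (boundary_edges (schreier_edges S act Orb) (cell n x))"
  let ?c = "card (cell n x)"
  have "0 < ?c"
    using assms cell_self finite_cell card_gt_0_iff by blast
  then have "ennreal (iso_const (schreier_edges S act Orb) (cell n x)) = of_nat ?b / of_nat ?c"
    by (simp add: iso_const_def ennreal_of_nat_eq_real_of_nat divide_ennreal)
  also have "\<dots> \<le> of_nat (\<Sum>y\<in>cell n x. card (bad_gens n K y)) / of_nat ?c"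
    by (intro divide_right_mono_ennreal of_nat_mono card_boundary_cell_le)
  also have "\<dots> = cell_avg n (bad_count n K) x"
    by (simp add: cell_avg_def)
  finally show ?thesis .
qed

lemma folner_seq_cells:
  assumes "x \<in> good" and "(\<lambda>k. cell_avg (n k) (bad_count (n k) (K k)) x) \<longlonglongrightarrow> 0"
  shows "folner_seq (orbit G act x) (schreier_edges S act (orbit G act x)) (\<lambda>k. cell (n k) x)"
proof -
  let ?iso = "\<lambda>k. iso_const (schreier_edges S act (orbit G act x)) (cell (n k) x)"
  have "(\<lambda>k. ennreal (?iso k)) \<longlonglongrightarrow> 0"
  proof (rule tendsto_sandwich[OF _ _ tendsto_const assms(2)])
    show "eventually (\<lambda>k. 0 \<le> ennreal (?iso k)) sequentially"
      by simp
    show "eventually (\<lambda>k. ennreal (?iso k) \<le> cell_avg (n k) (bad_count (n k) (K k)) x) sequentially"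
      using iso_const_cell_le[OF assms(1)] by simp
  qed
  then have "?iso \<longlonglongrightarrow> 0"
    by (intro tendsto_ennrealD) (simp_all add: iso_const_def)
  then show ?thesis
    using assms(1) finite_cell cell_nonempty_iff cell_subset_orbit by (simp add: folner_seq_def)
qed

lemma card_cut_edges_le:
  assumes "finite V" and "0 \<le> B"
    and "(\<Sum>y\<in>V. \<Sum>i. ennreal (2 ^ i) * bad_count (n i) (K i) y) \<le> ennreal B * of_nat (card V)"
  shows "real (card (induced_edges E V \<inter> cut_edges (n j) (K j))) \<le> B / 2 ^ j * real (card V)"
proof -
  let ?D = "induced_edges E V \<inter> cut_edges (n j) (K j)"
  have "ennreal (2 ^ j) * of_nat (card ?D) \<le>
      ennreal (2 ^ j) * of_nat (\<Sum>y\<in>V. card (bad_gens (n j) (K j) y))"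
    by (intro mult_left_mono of_nat_mono card_induced_cut_edges_le assms(1)) simp
  also have "\<dots> = (\<Sum>y\<in>V. ennreal (2 ^ j) * bad_count (n j) (K j) y)"
    by (simp add: sum_distrib_left)
  also have "\<dots> \<le> (\<Sum>y\<in>V. \<Sum>i. ennreal (2 ^ i) * bad_count (n i) (K i) y)"
    by (intro sum_mono) (rule ennreal_le_suminf_term)
  also have "\<dots> \<le> ennreal B * of_nat (card V)"
    by (rule assms(3))
  finally have "2 ^ j * real (card ?D) \<le> B * real (card V)"
    using assms(2) by (simp add: ennreal_of_nat_eq_real_of_nat ennreal_mult[symmetric])
  then show ?thesis
    by (simp add: field_simps)
qed

lemma hyperfinite_graph_seq_if_bounded:
  assumes V: "\<And>k. finite (V k)" "\<And>k. V k \<subseteq> good" and "0 < B"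
    and bounded: "\<And>k. (\<Sum>y\<in>V k. \<Sum>i. ennreal (2 ^ i) * bad_count (n i) (K i) y)
      \<le> ennreal B * of_nat (card (V k))"
  shows "hyperfinite_graph_seq V (\<lambda>k. induced_edges (schreier_edges S act Orb) (V k))"
  unfolding hyperfinite_graph_seq_def
proof (intro allI impI)
  fix \<epsilon> :: real
  assume "\<epsilon> > 0"
  have "eventually (\<lambda>j. (1/2) ^ j < \<epsilon> / B) sequentially"
    using \<open>\<epsilon> > 0\<close> \<open>0 < B\<close> by (intro order_tendstoD(2)[OF LIMSEQ_power_zero]) auto
  then obtain j where "(1/2) ^ j < \<epsilon> / B"
    by (auto simp: eventually_sequentially)
  then have j: "B / 2 ^ j \<le> \<epsilon>"
    using \<open>0 < B\<close> by (simp add: field_simps)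
  let ?E = "schreier_edges S act Orb"
  have "\<exists>D. D \<subseteq> induced_edges ?E (V k) \<and> real (card D) \<le> \<epsilon> * real (card (V k)) \<and>
      (\<forall>v\<in>V k. card (component (induced_edges ?E (V k) - D) v) \<le> max 1 (K j))" for k
  proof (intro exI conjI)
    let ?D = "induced_edges ?E (V k) \<inter> cut_edges (n j) (K j)"
    show "?D \<subseteq> induced_edges ?E (V k)"
      by blast
    show "\<forall>v\<in>V k. card (component (induced_edges ?E (V k) - ?D) v) \<le> max 1 (K j)"
      using V(2) by (intro ballI card_component_le) (auto simp: induced_edges_def)
    have "real (card ?D) \<le> B / 2 ^ j * real (card (V k))"
      using V(1) \<open>0 < B\<close> bounded by (intro card_cut_edges_le) auto
    also have "\<dots> \<le> \<epsilon> * real (card (V k))"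
      using j by (intro mult_right_mono) auto
    finally show "real (card ?D) \<le> \<epsilon> * real (card (V k))" .
  qed
  then show "\<exists>K. \<forall>k. \<exists>D. D \<subseteq> induced_edges ?E (V k) \<and> real (card D) \<le> \<epsilon> * real (card (V k)) \<and>
      (\<forall>v\<in>V k. card (component (induced_edges ?E (V k) - D) v) \<le> K)"
    by blast
qed

lemma has_hyperfinite_folner_if_cell_avg_finite:
  assumes x: "x \<in> good"
    and sum: "(\<Sum>j. cell_avg (n j) (bad_count (n j) (K j)) x) \<noteq> \<infinity>"
    and lim: "liminf (\<lambda>j. cell_avg (n j) (\<lambda>y. \<Sum>i. ennreal (2 ^ i) * bad_count (n i) (K i) y) x) \<noteq> \<infinity>"
  shows "has_hyperfinite_folner S act (orbit G act x)"
proof -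
  let ?\<Phi> = "\<lambda>y. \<Sum>i. ennreal (2 ^ i) * bad_count (n i) (K i) y"
  from lim have "liminf (\<lambda>j. cell_avg (n j) ?\<Phi> x) < \<infinity>"
    by (simp add: less_top)
  then obtain r :: "nat \<Rightarrow> nat" and B where r: "strict_mono r" and "0 < B"
    and B: "\<And>k. cell_avg (n (r k)) ?\<Phi> x \<le> ennreal B"
    using liminf_less_top_imp_bounded_subseq by blast
  have "(\<lambda>j. cell_avg (n j) (bad_count (n j) (K j)) x) \<longlonglongrightarrow> 0"
    using sum by (rule suminf_neq_infinity_imp_tendsto_0)
  then have "(\<lambda>k. cell_avg (n (r k)) (bad_count (n (r k)) (K (r k))) x) \<longlonglongrightarrow> 0"
    using LIMSEQ_subseq_LIMSEQ[OF _ r] by (simp add: o_def)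
  then have "folner_seq (orbit G act x) (schreier_edges S act (orbit G act x)) (\<lambda>k. cell (n (r k)) x)"
    by (rule folner_seq_cells[OF x])
  moreover have "hyperfinite_graph_seq (\<lambda>k. cell (n (r k)) x)
      (\<lambda>k. induced_edges (schreier_edges S act (orbit G act x)) (cell (n (r k)) x))"
  proof (rule hyperfinite_graph_seq_if_bounded[where V = "\<lambda>k. cell (n (r k)) x"])
    show "finite (cell (n (r k)) x)" "cell (n (r k)) x \<subseteq> good" for k
      by (simp_all add: finite_cell cell_subset_good)
    show "0 < B"
      by fact
    fix k
    have "(\<Sum>y\<in>cell (n (r k)) x. ?\<Phi> y) = of_nat (card (cell (n (r k)) x)) * cell_avg (n (r k)) ?\<Phi> x"
      by (rule sum_cell_eq_card_times_avg)
    also have "\<dots> \<le> of_nat (card (cell (n (r k)) x)) * ennreal B"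
      using B by (rule mult_left_mono) simp
    finally show "(\<Sum>y\<in>cell (n (r k)) x. ?\<Phi> y) \<le> ennreal B * of_nat (card (cell (n (r k)) x))"
      by (simp add: mult.commute)
  qed
  ultimately show ?thesis
    by (auto simp: has_hyperfinite_folner_def)
qed

lemma bad_count_integrals_finite:
  assumes small: "\<And>j. (\<integral>\<^sup>+ y. bad_count (n j) (K j) y \<partial>M) < ennreal ((1/4) ^ j)"
  shows "(\<Sum>j. \<integral>\<^sup>+ y. bad_count (n j) (K j) y \<partial>M) \<noteq> \<infinity>"
    and "(\<integral>\<^sup>+ y. (\<Sum>i. ennreal (2 ^ i) * bad_count (n i) (K i) y) \<partial>M) \<noteq> \<infinity>"
proof -
  let ?\<Phi> = "\<lambda>y. \<Sum>i. ennreal (2 ^ i) * bad_count (n i) (K i) y"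
  have "(\<Sum>j. \<integral>\<^sup>+ y. bad_count (n j) (K j) y \<partial>M) \<le> (\<Sum>j. ennreal ((1/4) ^ j))"
    by (intro suminf_le summableI less_imp_le small)
  also have "\<dots> < \<infinity>"
    by (rule suminf_ennreal_geometric_less_top) simp_all
  finally show "(\<Sum>j. \<integral>\<^sup>+ y. bad_count (n j) (K j) y \<partial>M) \<noteq> \<infinity>"
    by (simp only: less_top)
  have [measurable]: "bad_count (n i) (K i) \<in> borel_measurable M" for i
    by (rule borel_measurable_bad_count)
  have "(\<integral>\<^sup>+ y. ?\<Phi> y \<partial>M) = (\<Sum>i. \<integral>\<^sup>+ y. ennreal (2 ^ i) * bad_count (n i) (K i) y \<partial>M)"
    by (rule nn_integral_suminf) measurable
  also have "\<dots> = (\<Sum>i. ennreal (2 ^ i) * \<integral>\<^sup>+ y. bad_count (n i) (K i) y \<partial>M)"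
    by (simp add: nn_integral_cmult)
  also have "\<dots> \<le> (\<Sum>i. ennreal (2 ^ i) * ennreal ((1/4) ^ i))"
    by (intro suminf_le summableI mult_left_mono less_imp_le small zero_le)
  also have "\<dots> = (\<Sum>i. ennreal ((1/2) ^ i))"
    by (simp add: ennreal_mult[symmetric] power_mult_distrib[symmetric])
  also have "\<dots> < \<infinity>"
    by (rule suminf_ennreal_geometric_less_top) simp_all
  finally show "(\<integral>\<^sup>+ y. ?\<Phi> y \<partial>M) \<noteq> \<infinity>"
    by (simp only: less_top)
qed

theorem AE_has_hyperfinite_folner: "AE x in M. has_hyperfinite_folner S act (orbit G act x)"
proof -
  have "\<forall>j. \<exists>n K. (\<integral>\<^sup>+ y. bad_count n K y \<partial>M) < ennreal ((1/4) ^ j)"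
    by (intro allI ex_small_bad_count) simp
  then obtain n K where small: "\<And>j. (\<integral>\<^sup>+ y. bad_count (n j) (K j) y \<partial>M) < ennreal ((1/4) ^ j)"
    by metis
  let ?\<Phi> = "\<lambda>y. \<Sum>i. ennreal (2 ^ i) * bad_count (n i) (K i) y"
  have [measurable]: "bad_count (n i) (K i) \<in> borel_measurable M" for i
    by (rule borel_measurable_bad_count)
  have "AE x in M. liminf (\<lambda>j. cell_avg (n j) ?\<Phi> x) \<noteq> \<infinity>"
    using bad_count_integrals_finite(2)[OF small] by (intro AE_liminf_cell_avg_finite) measurable
  moreover have "AE x in M. (\<Sum>j. cell_avg (n j) (bad_count (n j) (K j)) x) \<noteq> \<infinity>"
    using borel_measurable_bad_count bad_count_integrals_finite(1)[OF small]
    by (rule AE_suminf_cell_avg_finite)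
  ultimately show ?thesis
    using AE_good by eventually_elim (rule has_hyperfinite_folner_if_cell_avg_finite)
qed

end

theorem proposition4p6:
  fixes G :: "('g, 'b) monoid_scheme"
    and S :: "'g set"
    and \<mu> :: "'z::polish_space measure"
    and act :: "'g \<Rightarrow> 'z \<Rightarrow> 'z"
  assumes "group G"
    and "finite S" and "S \<subseteq> carrier G"
    and "\<forall>s\<in>S. inv\<^bsub>G\<^esub> s \<in> S"
    and "generate G S = carrier G"
    and "prob_space \<mu>" and "sets \<mu> = sets borel"
    and "pmp_action G \<mu> act"
    and "hyperfinite_action G \<mu> act"
  shows "AE z in \<mu>. has_hyperfinite_folner S act (orbit G act z)"
proof -
  obtain N F where "N \<in> null_sets \<mu>" "\<forall>n. finite_measurable_equiv \<mu> (F n)"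
    "\<forall>n. F n \<subseteq> F (Suc n)"
    "\<forall>x\<in>space \<mu> - N. \<forall>y\<in>space \<mu> - N. (x, y) \<in> orbit_rel G \<mu> act \<longleftrightarrow> (\<exists>n. (x, y) \<in> F n)"
    using assms(9) unfolding hyperfinite_action_def by blast
  moreover have "countable (carrier G)"
    using countable_generate[OF countable_finite[OF assms(2)], of G] assms(5) by simp
  ultimately interpret hyperfinite_schreier G \<mu> act N F S
    using assms by unfold_locales auto
  show ?thesis
    by (rule AE_has_hyperfinite_folner)
qed

end
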